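(* Let $d\ge3$ and let $V:\mathbb{C}^{d^2-1}\to\mathbb{C}^d\otimes\mathbb{C}^d$ be any isometry whose range is orthogonal to $\ket{\phi_d^+}=\frac1{\sqrt d}\sum_{k=0}^{d-1}\ket{k}\otimes\ket{k}$ (equivalently, the range is the orthogonal complement of $\ket{\phi^+_d}$). Let $\mathcal{N}^V_{d^2-1}:\mathcal{L}(\mathbb{C}^{d^2-1})\to\mathcal{L}(\mathbb{C}^d)$ be $\mathcal{N}^V_{d^2-1}(\rho)=\operatorname{Tr}_E(V\rho V^\dagger)$ (trace over the second factor). Then $M_{k_d}\in\mathcal{P}^{(d^2-1)\to(d^2-1)}_{\min}(\mathcal{N}^V_{d^2-1},V)$, and consequently $\mathcal{P}^{(d^2-1)\to(d^2-1)}_{\min}(\mathcal{N}^V_{d^2-1},V)\not\subseteq\mathcal{P}^{(d^2-1)\to(d^2-1)}(\mathcal{Q}_{\tilde d})$ for every $\tilde d<d^2-1$; i.e. minimal environment assistance optimally unlocks the encoding strength of $\mathcal{N}^V_{d^2-1}$.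
   Context: $M_{k_d}=M_\Sigma\oplus\mathbb{I}_{d(d-1)}$, where $M_\Sigma$ is the $(d-1)\times(d-1)$ lower-triangular matrix with $(M_\Sigma)_{ij}=0$ for $j>i$, $(M_\Sigma)_{i1}=\frac2{i(i+1)}$, $(M_\Sigma)_{ij}=\frac1{i(i+1)}$ for $1<j<i$, and $(M_\Sigma)_{ii}=\frac{i}{i+1}$ for $i>1$. $\mathcal{P}^{n\to m}(\mathcal{Q}_d)$ is the set of $n\times m$ matrices $P_{ij}=\operatorname{Tr}[\Lambda_j\rho_i]$ with $\rho_i$ density matrices on $\mathbb{C}^d$ and $\{\Lambda_j\}$ a POVM on $\mathbb{C}^d$. For a channel $\mathcal{N}$ with isometry $V:\mathbb{C}^{d_A}\to\mathbb{C}^{d_B}\otimes\mathbb{C}^{d_E}$ (first factor receiver, second environment), $\mathcal{P}^{n\to m}_{\min}(\mathcal{N},V)$ is the set of $n\times m$ matrices $P_{ij}=\sum_{l,k}q(j\mid l,k)\operatorname{Tr}[(\Lambda^B_l\otimes\Lambda^E_k)V\rho_iV^\dagger]$, where $\rho_i$ are density matrices on $\mathbb{C}^{d_A}$, $\{\Lambda^B_l\}$, $\{\Lambda^E_k\}$ are finite-outcome POVMs on $\mathbb{C}^{d_B}$, $\mathbb{C}^{d_E}$ chosen independently, and $q(\cdot\mid l,k)$ is a probability distribution on $\{1,\dots,m\}$. *)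

theory Defs
  imports "Jordan_Normal_Form.Schur_Decomposition"
begin

(* Conventions: C^d_B (x) C^d_E is identified with C^(d_B*d_E) via |a> (x) |b>  |->  e_(a*d_E+b);
   the first tensor factor is the receiver B, the second the environment E. *)

definition cinner :: "complex vec \<Rightarrow> complex vec \<Rightarrow> complex" where
  "cinner v w = (\<Sum>i<dim_vec v. cnj (v $ i) * w $ i)"

definition mtrace :: "complex mat \<Rightarrow> complex" where
  "mtrace A = (\<Sum>i<dim_row A. A $$ (i, i))"

definition psd :: "nat \<Rightarrow> complex mat \<Rightarrow> bool" where
  "psd n A \<longleftrightarrow> A \<in> carrier_mat n n \<and> mat_adjoint A = A \<and>
     (\<forall>v \<in> carrier_vec n. 0 \<le> Re (cinner v (A *\<^sub>v v)))"

definition density :: "nat \<Rightarrow> complex mat \<Rightarrow> bool" where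
  "density n \<rho> \<longleftrightarrow> psd n \<rho> \<and> mtrace \<rho> = 1"

definition povm :: "nat \<Rightarrow> (nat \<Rightarrow> complex mat) \<Rightarrow> nat \<Rightarrow> bool" where
  "povm n \<Lambda> m \<longleftrightarrow> (\<forall>j<m. psd n (\<Lambda> j)) \<and>
     (\<forall>a<n. \<forall>b<n. (\<Sum>j<m. \<Lambda> j $$ (a, b)) = (if a = b then 1 else 0))"

definition tensor_mat :: "complex mat \<Rightarrow> complex mat \<Rightarrow> complex mat" where
  "tensor_mat A B = mat (dim_row A * dim_row B) (dim_col A * dim_col B)
     (\<lambda>(i, j). A $$ (i div dim_row B, j div dim_col B) * B $$ (i mod dim_row B, j mod dim_col B))"

definition phi_plus :: "nat \<Rightarrow> complex vec" where
  "phi_plus d = vec (d * d) (\<lambda>i. if i div d = i mod d then complex_of_real (1 / sqrt (real d)) else 0)"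

definition isometry :: "nat \<Rightarrow> nat \<Rightarrow> complex mat \<Rightarrow> bool" where
  "isometry dA dOut V \<longleftrightarrow> V \<in> carrier_mat dOut dA \<and> mat_adjoint V * V = 1\<^sub>m dA"

definition channel_of_isometry :: "complex mat \<Rightarrow> nat \<Rightarrow> nat \<Rightarrow> complex mat \<Rightarrow> complex mat" where
  "channel_of_isometry V dB dE \<rho> =
     (let X = V * \<rho> * mat_adjoint V in mat dB dB (\<lambda>(a, b). \<Sum>e<dE. X $$ (a * dE + e, b * dE + e)))"

definition P_Q :: "nat \<Rightarrow> nat \<Rightarrow> nat \<Rightarrow> real mat set" where
  "P_Q d n m = {P. P \<in> carrier_mat n m \<and>
     (\<exists>\<rho> \<Lambda>. (\<forall>i<n. density d (\<rho> i)) \<and> povm d \<Lambda> m \<and>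
        (\<forall>i<n. \<forall>j<m. complex_of_real (P $$ (i, j)) = mtrace (\<Lambda> j * \<rho> i)))}"

text \<open>P^{n->m}_min(N, V) for N = channel_of_isometry V dB dE (the set depends on N only via V);
  input dimension dA = dim_col V.\<close>
definition P_min :: "complex mat \<Rightarrow> nat \<Rightarrow> nat \<Rightarrow> nat \<Rightarrow> nat \<Rightarrow> real mat set" where
  "P_min V dB dE n m = {P. P \<in> carrier_mat n m \<and>
     (\<exists>\<rho> L \<Lambda>B K \<Lambda>E q. (\<forall>i<n. density (dim_col V) (\<rho> i)) \<and> povm dB \<Lambda>B L \<and> povm dE \<Lambda>E K \<and>
        (\<forall>l<L. \<forall>k<K. (\<forall>j<m. 0 \<le> q j l k) \<and> (\<Sum>j<m. q j l k) = (1::real)) \<and>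
        (\<forall>i<n. \<forall>j<m. complex_of_real (P $$ (i, j)) =
           (\<Sum>l<L. \<Sum>k<K. complex_of_real (q j l k) *
              mtrace (tensor_mat (\<Lambda>B l) (\<Lambda>E k) * V * \<rho> i * mat_adjoint V))))}"

text \<open>M_{k_d} = M_Sigma (+) I_{d(d-1)}, 0-based indices (row i, column j correspond to i+1, j+1).\<close>
definition M_Sigma_entry :: "nat \<Rightarrow> nat \<Rightarrow> real" where
  "M_Sigma_entry I J =
     (if J > I then 0
      else if J = 1 then 2 / (real I * (real I + 1))
      else if J = I then real I / (real I + 1)
      else 1 / (real I * (real I + 1)))"

definition M_kd :: "nat \<Rightarrow> real mat" where
  "M_kd d = mat (d\<^sup>2 - 1) (d\<^sup>2 - 1) (\<lambda>(i, j).
     if i < d - 1 \<and> j < d - 1 then M_Sigma_entry (i + 1) (j + 1)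
     else if d - 1 \<le> i \<and> d - 1 \<le> j then (if i = j then 1 else 0)
     else 0)"

end

theory Submission
  imports Defs
begin

text \<open>
  M_kd is lower triangular with nonzero diagonal. If it is realized as
  tr(\<Lambda> j * \<rho> i) with states and effects on a space of dimension d', then the support of each
  \<rho> i contains a vector v i with \<langle>v i, \<Lambda> i (v i)\<rangle> \<noteq> 0 that is annihilated by every \<Lambda> j with
  j > i. The matrix \<langle>v j, \<Lambda> j (v i)\<rangle> is then triangular and invertible, yet it factors through
  a space of dimension d', so d^2 - 1 \<le> d'.

  The range of V is the orthogonal complement of phi_plus, so every unit vector
  \<psi> orthogonal to phi_plus equals V times V\<dagger> \<psi>, and the input state built from V\<dagger> \<psi> is
  mapped by the isometry to the pure state of \<psi>. Measuring receiver and environment in the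
  computational basis then yields the outcome (l, k) with probability \<psi>(l, k)^2. The d - 1
  normalized diagonal Gell-Mann vectors and the d(d - 1) product vectors |l k\<rangle> with l \<noteq> k are
  all orthogonal to phi_plus; after merging the outcomes (0, 0) and (1, 1) their statistics are
  exactly the rows of M_kd.
\<close>

section \<open>Positive semidefinite matrices\<close>

lemma mat_mult_entry:
  assumes "A \<in> carrier_mat l m" "B \<in> carrier_mat m k" "i < l" "j < k"
  shows "(A * B) $$ (i, j) = (\<Sum>x<m. A $$ (i, x) * B $$ (x, j))"
  using assms by (auto simp: scalar_prod_def lessThan_atLeast0)

lemma mtrace_mult:
  assumes A: "A \<in> carrier_mat n m" and B: "B \<in> carrier_mat m n"
  shows "mtrace (A * B) = (\<Sum>i<n. \<Sum>j<m. A $$ (i, j) * B $$ (j, i))"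
proof -
  have "mtrace (A * B) = (\<Sum>i<n. (A * B) $$ (i, i))"
    unfolding mtrace_def using A by simp
  also have "\<dots> = (\<Sum>i<n. \<Sum>j<m. A $$ (i, j) * B $$ (j, i))"
    by (intro sum.cong refl) (simp add: mat_mult_entry[OF A B])
  finally show ?thesis .
qed

lemma mat_adjoint_dim [simp]:
  "dim_row (mat_adjoint A) = dim_col A" "dim_col (mat_adjoint A) = dim_row A"
  by (auto simp: mat_adjoint_def)

lemma mat_adjoint_entry [simp]:
  "i < dim_col A \<Longrightarrow> j < dim_row A \<Longrightarrow> mat_adjoint A $$ (i, j) = cnj (A $$ (j, i))"
  by (auto simp: mat_adjoint_def mat_of_rows_def)

lemma mat_adjoint_carrier: "A \<in> carrier_mat m n \<Longrightarrow> mat_adjoint A \<in> carrier_mat n m"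
  by auto

lemma sum_lessThan_mult: "(\<Sum>r<d * e. f r) = (\<Sum>a<d. \<Sum>b<e. f (a * e + b :: nat))"
proof (induction d)
  case 0
  then show ?case by simp
next
  case (Suc d)
  have split: "{..<Suc d * e} = {..<d * e} \<union> {d * e..<d * e + e}" by auto
  have "(\<Sum>r<Suc d * e. f r) = (\<Sum>r<d * e. f r) + (\<Sum>r\<in>{d * e..<d * e + e}. f r)"
    unfolding split by (rule sum.union_disjoint) auto
  also have "(\<Sum>r\<in>{d * e..<d * e + e}. f r) = (\<Sum>b<e. f (d * e + b))"
    by (rule sum.reindex_bij_witness[of _ "\<lambda>b. d * e + b" "\<lambda>r. r - d * e"]) auto
  finally show ?case using Suc by simp
qed

lemma sum_lessThan_delta2:
  fixes a b n m :: nat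
  assumes "a < n" "b < m"
  shows "(\<Sum>x<n. \<Sum>y<m. if x = a \<and> y = b then f x y else 0) = f a b"
proof -
  have "(\<Sum>x<n. \<Sum>y<m. if x = a \<and> y = b then f x y else 0) =
      (\<Sum>x<n. if x = a then (\<Sum>y<m. if y = b then f x y else 0) else 0)"
    by (intro sum.cong refl) auto
  also have "\<dots> = f a b" using assms by (simp add: sum.delta)
  finally show ?thesis .
qed

definition sesq :: "nat \<Rightarrow> complex mat \<Rightarrow> (nat \<Rightarrow> complex) \<Rightarrow> (nat \<Rightarrow> complex) \<Rightarrow> complex" where
  "sesq n A u v = (\<Sum>a<n. \<Sum>b<n. cnj (u a) * A $$ (a, b) * v b)"

lemma cinner_mult_mat_vec:
  assumes "v \<in> carrier_vec n" "A \<in> carrier_mat n n"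
  shows "cinner v (A *\<^sub>v v) = sesq n A (\<lambda>a. v $ a) (\<lambda>a. v $ a)"
  using assms
  by (auto simp: cinner_def sesq_def scalar_prod_def lessThan_atLeast0 sum_distrib_left mult.assoc)

lemma sesq_add_scaled:
  "sesq n A (\<lambda>a. f a + \<mu> * g a) (\<lambda>a. f a + \<mu> * g a) =
   sesq n A f f + \<mu> * sesq n A f g + cnj \<mu> * sesq n A g f + \<mu> * cnj \<mu> * sesq n A g g"
  by (simp add: sesq_def algebra_simps sum.distrib sum_distrib_left)

lemma psdI:
  assumes "B \<in> carrier_mat n n" "\<And>a b. a < n \<Longrightarrow> b < n \<Longrightarrow> B $$ (a, b) = cnj (B $$ (b, a))"
    and "\<And>v. 0 \<le> Re (sesq n B v v)"
  shows "psd n B"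
  unfolding psd_def
proof (intro conjI ballI)
  show "B \<in> carrier_mat n n" by fact
  show "mat_adjoint B = B"
    by (rule eq_matI) (use assms(1) in \<open>auto simp: assms(2)[symmetric]\<close>)
  fix v :: "complex vec"
  assume "v \<in> carrier_vec n"
  then show "0 \<le> Re (cinner v (B *\<^sub>v v))"
    using assms(1,3) by (simp add: cinner_mult_mat_vec)
qed

lemma psd_sesq_nonneg:
  assumes "psd n A"
  shows "0 \<le> Re (sesq n A v v)"
proof -
  have A: "A \<in> carrier_mat n n" and v: "vec n v \<in> carrier_vec n"
    using assms by (auto simp: psd_def)
  have "0 \<le> Re (cinner (vec n v) (A *\<^sub>v vec n v))"
    using assms v unfolding psd_def by blast
  also have "cinner (vec n v) (A *\<^sub>v vec n v) = sesq n A v v"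
    using A v by (simp add: cinner_mult_mat_vec sesq_def)
  finally show ?thesis .
qed

lemma psd_hermitian:
  assumes "psd n A" "a < n" "b < n"
  shows "A $$ (a, b) = cnj (A $$ (b, a))"
proof -
  have A: "A \<in> carrier_mat n n" "mat_adjoint A = A" using assms(1) by (auto simp: psd_def)
  have "mat_adjoint A $$ (a, b) = cnj (A $$ (b, a))" using A(1) assms(2,3) by simp
  then show ?thesis unfolding A(2) .
qed

lemma psd_sesq_swap:
  assumes "psd n A"
  shows "sesq n A u v = cnj (sesq n A v u)"
proof -
  have "sesq n A u v = (\<Sum>b<n. \<Sum>a<n. cnj (u a) * A $$ (a, b) * v b)"
    unfolding sesq_def by (rule sum.swap)
  also have "\<dots> = (\<Sum>b<n. \<Sum>a<n. cnj (cnj (v b) * A $$ (b, a) * u a))"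
  proof (intro sum.cong refl)
    fix b a
    assume "b \<in> {..<n}" "a \<in> {..<n}"
    then have "A $$ (a, b) = cnj (A $$ (b, a))" by (intro psd_hermitian[OF assms]) auto
    then show "cnj (u a) * A $$ (a, b) * v b = cnj (cnj (v b) * A $$ (b, a) * u a)" by simp
  qed
  also have "\<dots> = cnj (sesq n A v u)" unfolding sesq_def cnj_sum by simp
  finally show ?thesis .
qed

text \<open>Positivity of the form at w - t A w for small t > 0 forces A w = 0.\<close>

lemma psd_sesq_zero_imp_kernel:
  assumes "psd n A" "Re (sesq n A w w) = 0" "a < n"
  shows "(\<Sum>b<n. A $$ (a, b) * w b) = 0"
proof -
  define z where "z a = (\<Sum>b<n. A $$ (a, b) * w b)" for a
  define S where "S = (\<Sum>a<n. (cmod (z a))\<^sup>2)"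
  define R where "R = Re (sesq n A z z)"
  have R0: "0 \<le> R" using psd_sesq_nonneg[OF assms(1)] by (simp add: R_def)
  have zw: "sesq n A z w = (\<Sum>a<n. cnj (z a) * z a)"
    by (simp add: sesq_def z_def sum_distrib_left mult.assoc)
  have reS: "Re (\<Sum>a<n. cnj (z a) * z a) = S"
    by (simp add: S_def cmod_def power2_eq_square)
  have wz: "sesq n A w z = cnj (sesq n A z w)" by (rule psd_sesq_swap[OF assms(1)])
  have quadratic: "0 \<le> - 2 * t * S + t * t * R" for t :: real
  proof -
    have "0 \<le> Re (sesq n A (\<lambda>a. w a + complex_of_real (-t) * z a) (\<lambda>a. w a + complex_of_real (-t) * z a))"
      by (rule psd_sesq_nonneg[OF assms(1)])
    also have "\<dots> = - 2 * t * S + t * t * R"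
      unfolding sesq_add_scaled wz zw using assms(2) reS by (simp add: R_def)
    finally show ?thesis .
  qed
  have "S = 0"
  proof (rule ccontr)
    assume "S \<noteq> 0"
    then have Sp: "S > 0" by (simp add: S_def order_less_le sum_nonneg)
    define t where "t = S / (R + 1)"
    have tp: "t > 0" using Sp R0 by (simp add: t_def)
    have "0 \<le> t * (- 2 * S + t * R)" using quadratic[of t] by (simp add: algebra_simps)
    then have "0 \<le> - 2 * S + t * R" using tp by (simp add: zero_le_mult_iff)
    moreover have "t * R < S" using Sp R0 by (simp add: t_def field_simps)
    ultimately show False using Sp by simp
  qed
  then have "(cmod (z a))\<^sup>2 = 0"
    using assms(3) sum_nonneg_eq_0_iff[of "{..<n}" "\<lambda>a. (cmod (z a))\<^sup>2"] by (simp add: S_def)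
  then show ?thesis by (simp add: z_def)
qed

definition delta :: "nat \<Rightarrow> nat \<Rightarrow> complex" where
  "delta k a = (if a = k then 1 else 0)"

lemma if_mult_distrib:
  "(if P then x else y) * (z :: complex) = (if P then x * z else y * z)"
  "(z :: complex) * (if P then x else y) = (if P then z * x else z * y)"
  "cnj (if P then x else y) = (if P then cnj x else cnj y)"
  by simp_all

lemma sum_if_const: "(\<Sum>b\<in>B. if P then g b else (0 :: complex)) = (if P then sum g B else 0)"
  by simp

lemma sesq_delta:
  assumes "k < n"
  shows "sesq n A (delta k) (delta k) = A $$ (k, k)"
    and "sesq n A f (delta k) = (\<Sum>a<n. cnj (f a) * A $$ (a, k))"
    and "sesq n A (delta k) f = (\<Sum>b<n. A $$ (k, b) * f b)"
  using assms by (simp_all add: sesq_def delta_def if_mult_distrib sum_if_const cong: if_cong)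

lemma psd_zero_diag:
  assumes "psd n A" "k < n" "A $$ (k, k) = 0" "a < n"
  shows "A $$ (a, k) = 0" and "A $$ (k, a) = 0"
proof -
  have "Re (sesq n A (delta k) (delta k)) = 0" using assms(2,3) sesq_delta(1) by simp
  from psd_sesq_zero_imp_kernel[OF assms(1) this assms(4)]
  show col: "A $$ (a, k) = 0"
    using assms(2) by (simp add: delta_def if_mult_distrib sum_if_const cong: if_cong)
  show "A $$ (k, a) = 0"
    using psd_hermitian[OF assms(1,2,4)] col by simp
qed

lemma psd_diag_real:
  assumes "psd n A" "k < n"
  shows "A $$ (k, k) = complex_of_real (Re (A $$ (k, k)))" and "0 \<le> Re (A $$ (k, k))"
proof -
  have "A $$ (k, k) = cnj (A $$ (k, k))" using psd_hermitian[OF assms(1,2,2)] .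
  then have "Im (A $$ (k, k)) = 0" by (metis Reals_cnj_iff complex_is_Real_iff)
  then show "A $$ (k, k) = complex_of_real (Re (A $$ (k, k)))" by (simp add: complex_eq_iff)
  show "0 \<le> Re (A $$ (k, k))" using psd_sesq_nonneg[OF assms(1), of "delta k"] sesq_delta(1)[OF assms(2)] by simp
qed

section \<open>Rank-one decompositions and a dimension bound\<close>

lemma sesq_subtract_rank_one:
  fixes v :: "nat \<Rightarrow> complex"
  assumes psdB: "psd n B" and kn: "k < n" and Bkk: "B $$ (k, k) = complex_of_real c" and cpos: "c > 0"
  defines "u \<equiv> \<lambda>a. B $$ (a, k) / complex_of_real (sqrt c)"
    and "\<beta> \<equiv> (\<Sum>b<n. B $$ (k, b) * v b)"
  shows "sesq n (mat n n (\<lambda>(a, b). B $$ (a, b) - u a * cnj (u b))) v v =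
    sesq n B (\<lambda>a. v a + (- \<beta> / complex_of_real c) * delta k a) (\<lambda>a. v a + (- \<beta> / complex_of_real c) * delta k a)"
proof -
  define s where "s = complex_of_real (sqrt c)"
  have ss: "s * s = complex_of_real c" using cpos by (simp add: s_def flip: of_real_mult)
  have cs: "cnj s = s" by (simp add: s_def)
  have vk: "sesq n B v (delta k) = cnj \<beta>"
    using psd_sesq_swap[OF psdB, of v "delta k"] by (simp add: sesq_delta(3)[OF kn] \<beta>_def)
  have kv: "sesq n B (delta k) v = \<beta>" by (simp add: sesq_delta(3)[OF kn] \<beta>_def)
  have sum1: "(\<Sum>b<n. cnj (u b) * v b) = \<beta> / s"
    unfolding \<beta>_def sum_divide_distrib
  proof (rule sum.cong[OF refl])
    fix b
    assume "b \<in> {..<n}"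
    then show "cnj (u b) * v b = B $$ (k, b) * v b / s"
      using psd_hermitian[OF psdB kn] by (simp add: u_def s_def)
  qed
  have "(\<Sum>a<n. cnj (v a) * u a) = sesq n B v (delta k) / s"
    unfolding sesq_delta(2)[OF kn] u_def s_def sum_divide_distrib by (simp add: mult.assoc)
  then have sum2: "(\<Sum>a<n. cnj (v a) * u a) = cnj \<beta> / s" by (simp add: vk)
  have "sesq n (mat n n (\<lambda>(a, b). B $$ (a, b) - u a * cnj (u b))) v v =
      (\<Sum>a<n. \<Sum>b<n. cnj (v a) * B $$ (a, b) * v b - (cnj (v a) * u a) * (cnj (u b) * v b))"
    unfolding sesq_def by (intro sum.cong refl) (simp add: algebra_simps)
  also have "\<dots> = sesq n B v v - (\<Sum>a<n. cnj (v a) * u a) * (\<Sum>b<n. cnj (u b) * v b)"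
    by (simp add: sesq_def sum_subtractf sum_product)
  also have "\<dots> = sesq n B v v - cnj \<beta> * \<beta> / complex_of_real c"
    unfolding sum1 sum2 by (simp add: ss[symmetric])
  also have "\<dots> = sesq n B (\<lambda>a. v a + (- \<beta> / complex_of_real c) * delta k a)
      (\<lambda>a. v a + (- \<beta> / complex_of_real c) * delta k a)"
    unfolding sesq_add_scaled vk kv sesq_delta(1)[OF kn] Bkk using cpos by (simp add: field_simps)
  finally show ?thesis .
qed

text \<open>One step of a Cholesky decomposition.\<close>

lemma psd_subtract_rank_one:
  assumes psdB: "psd n B" and kn: "k < n" and Bkk0: "B $$ (k, k) \<noteq> 0"
  defines "u \<equiv> \<lambda>a. B $$ (a, k) / complex_of_real (sqrt (Re (B $$ (k, k))))"
  defines "B' \<equiv> mat n n (\<lambda>(a, b). B $$ (a, b) - u a * cnj (u b))"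
  shows "psd n B'" and "B' $$ (k, k) = 0"
    and "\<And>a. a < n \<Longrightarrow> B $$ (a, a) = 0 \<Longrightarrow> B' $$ (a, a) = 0"
proof -
  define c where "c = Re (B $$ (k, k))"
  have Bkk: "B $$ (k, k) = complex_of_real c" unfolding c_def by (rule psd_diag_real(1)[OF psdB kn])
  have "c \<noteq> 0" using Bkk0 Bkk by auto
  then have cpos: "c > 0" using psd_diag_real(2)[OF psdB kn] by (simp add: c_def)
  have u: "u a = B $$ (a, k) / complex_of_real (sqrt c)" for a by (simp add: u_def c_def)
  have B'e: "B' $$ (a, b) = B $$ (a, b) - u a * cnj (u b)" if "a < n" "b < n" for a b
    using that by (simp add: B'_def)
  show "psd n B'"
  proof (rule psdI)
    show "B' \<in> carrier_mat n n" by (simp add: B'_def)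
    fix a b
    assume "a < n" "b < n"
    then show "B' $$ (a, b) = cnj (B' $$ (b, a))"
      by (simp add: B'e u psd_hermitian[OF psdB, of a b] mult.commute)
  next
    fix v
    show "0 \<le> Re (sesq n B' v v)"
      unfolding B'_def u_def c_def[symmetric] sesq_subtract_rank_one[OF psdB kn Bkk cpos]
      by (rule psd_sesq_nonneg[OF psdB])
  qed
  have "u k = complex_of_real (sqrt c)"
    using cpos by (simp add: u Bkk real_div_sqrt flip: of_real_divide)
  then show Bkk': "B' $$ (k, k) = 0" using kn cpos by (simp add: B'e Bkk flip: of_real_mult)
  fix a
  assume a: "a < n" and Baa: "B $$ (a, a) = 0"
  show "B' $$ (a, a) = 0"
  proof (cases "a = k")
    case True
    then show ?thesis using Bkk' by simp
  next
    case False
    have "B $$ (a, k) = 0" using psd_zero_diag(2)[OF psdB a Baa kn] .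
    then show ?thesis using a kn by (simp add: B'e u Baa)
  qed
qed

lemma sum_lessThan_Suc_fun_upd:
  "(\<Sum>j<Suc k. (w(k := u)) j a * cnj ((w(k := u)) j b)) =
   (\<Sum>j<k. w j a * cnj (w j b)) + u a * cnj (u b)"
  by (auto intro!: sum.cong)

lemma psd_rank_one_sum_upto:
  assumes "psd n B" and "\<And>a. k \<le> a \<Longrightarrow> a < n \<Longrightarrow> B $$ (a, a) = 0"
  shows "\<exists>w. \<forall>a<n. \<forall>b<n. B $$ (a, b) = (\<Sum>j<k. w j a * cnj (w j b))"
  using assms
proof (induction k arbitrary: B)
  case 0
  have "B $$ (a, b) = 0" if "a < n" "b < n" for a b
    using psd_zero_diag(1)[OF "0.prems"(1) that(2) _ that(1)] "0.prems"(2) that by simp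
  then show ?case by simp
next
  case (Suc k)
  show ?case
  proof (cases "k < n \<and> B $$ (k, k) \<noteq> 0")
    case True
    define u where "u a = B $$ (a, k) / complex_of_real (sqrt (Re (B $$ (k, k))))" for a
    define B' where "B' = mat n n (\<lambda>(a, b). B $$ (a, b) - u a * cnj (u b))"
    note peel = psd_subtract_rank_one[OF Suc.prems(1), of k, folded u_def, folded B'_def]
    have "B' $$ (a, a) = 0" if "k \<le> a" "a < n" for a
      using peel(2,3)[OF True[THEN conjunct1] True[THEN conjunct2]] Suc.prems(2) that
      by (cases "a = k") auto
    with Suc.IH[OF peel(1)] True obtain w
      where w: "\<forall>a<n. \<forall>b<n. B' $$ (a, b) = (\<Sum>j<k. w j a * cnj (w j b))" by blast
    have "B $$ (a, b) = (\<Sum>j<Suc k. (w(k := u)) j a * cnj ((w(k := u)) j b))" if "a < n" "b < n" for a b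
      using w that by (simp add: sum_lessThan_Suc_fun_upd B'_def diff_eq_eq)
    then show ?thesis by blast
  next
    case False
    then have "B $$ (a, a) = 0" if "k \<le> a" "a < n" for a
      using Suc.prems(2) that by (cases "a = k") auto
    with Suc.IH[OF Suc.prems(1)] obtain w
      where w: "\<forall>a<n. \<forall>b<n. B $$ (a, b) = (\<Sum>j<k. w j a * cnj (w j b))" by blast
    have "B $$ (a, b) = (\<Sum>j<Suc k. (w(k := \<lambda>_. 0)) j a * cnj ((w(k := \<lambda>_. 0)) j b))"
      if "a < n" "b < n" for a b
      using w that by (simp only: sum_lessThan_Suc_fun_upd) simp
    then show ?thesis by blast
  qed
qed

lemma psd_rank_one_sum:
  assumes "psd n B"
  shows "\<exists>w. \<forall>a<n. \<forall>b<n. B $$ (a, b) = (\<Sum>j<n. w j a * cnj (w j b))"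
  using psd_rank_one_sum_upto[of n B n] assms by simp

lemma trace_mult_rank_one_sum:
  fixes m :: nat
  assumes A: "A \<in> carrier_mat n n" and R: "R \<in> carrier_mat n n"
    and w: "\<forall>a<n. \<forall>b<n. R $$ (a, b) = (\<Sum>j<m. w j a * cnj (w j b))"
  shows "mtrace (A * R) = (\<Sum>j<m. sesq n A (w j) (w j))"
proof -
  have "mtrace (A * R) = (\<Sum>a<n. \<Sum>c<n. A $$ (a, c) * R $$ (c, a))"
    by (rule mtrace_mult[OF A R])
  also have "\<dots> = (\<Sum>a<n. \<Sum>c<n. \<Sum>j<m. cnj (w j a) * A $$ (a, c) * w j c)"
    by (intro sum.cong refl) (simp add: w sum_distrib_left mult.commute mult.left_commute)
  also have "\<dots> = (\<Sum>j<m. \<Sum>a<n. \<Sum>c<n. cnj (w j a) * A $$ (a, c) * w j c)"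
    by (subst sum.swap) (intro sum.cong refl sum.swap)
  finally show ?thesis by (simp add: sesq_def)
qed

lemma psd_trace_zero_imp_kernel:
  fixes m :: nat
  assumes A: "psd n A" and R: "R \<in> carrier_mat n n"
    and w: "\<forall>a<n. \<forall>b<n. R $$ (a, b) = (\<Sum>j<m. w j a * cnj (w j b))"
    and tr: "mtrace (A * R) = 0" and j: "j < m" and a: "a < n"
  shows "(\<Sum>b<n. A $$ (a, b) * w j b) = 0"
proof -
  have "(\<Sum>j<m. Re (sesq n A (w j) (w j))) = 0"
    using tr trace_mult_rank_one_sum[OF _ R w] A by (simp add: psd_def flip: Re_sum)
  then have "Re (sesq n A (w j) (w j)) = 0"
    by (subst (asm) sum_nonneg_eq_0_iff) (use psd_sesq_nonneg[OF A] j in auto)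
  then show ?thesis using psd_sesq_zero_imp_kernel[OF A _ a] by simp
qed

lemma triangular_factorization_dim_bound:
  fixes x y :: "nat \<Rightarrow> nat \<Rightarrow> 'a :: field"
  assumes diag: "\<And>i. i < n \<Longrightarrow> (\<Sum>c<dt. x i c * y i c) \<noteq> 0"
    and lower: "\<And>i j. i < j \<Longrightarrow> j < n \<Longrightarrow> (\<Sum>c<dt. x j c * y i c) = 0"
  shows "n \<le> dt"
proof (rule ccontr)
  assume "\<not> n \<le> dt"
  then have dtn: "dt < n" by simp
  define X where "X = mat n n (\<lambda>(j, c). if c < dt then x j c else 0)"
  define Y where "Y = mat n n (\<lambda>(c, i). if c < dt then y i c else 0)"
  have Xc: "X \<in> carrier_mat n n" and Yc: "Y \<in> carrier_mat n n" by (auto simp: X_def Y_def)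
  have XY: "(X * Y) $$ (j, i) = (\<Sum>c<dt. x j c * y i c)" if "j < n" "i < n" for i j
  proof -
    have "(X * Y) $$ (j, i) = (\<Sum>c<n. if c < dt then x j c * y i c else 0)"
      by (subst mat_mult_entry[OF Xc Yc that]) (intro sum.cong refl, use that in \<open>auto simp: X_def Y_def\<close>)
    also have "\<dots> = (\<Sum>c\<in>{c \<in> {..<n}. c < dt}. x j c * y i c)"
      by (rule sum.inter_filter[symmetric]) simp
    also have "{c \<in> {..<n}. c < dt} = {..<dt}" using dtn by auto
    finally show ?thesis .
  qed
  have "upper_triangular (X * Y)"
    unfolding upper_triangular_def using Xc XY lower by simp
  then have "det (X * Y) = (\<Prod>i = 0..<n. (X * Y) $$ (i, i))"
    using det_upper_triangular[of "X * Y" n] Xc Yc by (simp add: prod_list_diag_prod)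
  also have "\<dots> \<noteq> 0" using XY diag by (simp add: prod_zero_iff)
  finally have "det X * det Y \<noteq> 0" using det_mult[OF Xc Yc] by simp
  moreover have "det X = 0"
  proof -
    have "X *\<^sub>v unit_vec n (n - 1) = 0\<^sub>v n"
      using dtn Xc by (intro eq_vecI) (auto simp: X_def)
    then show ?thesis
      using dtn by (subst det_0_iff_vec_prod_zero_field[OF Xc]) (intro exI[of _ "unit_vec n (n - 1)"], auto)
  qed
  ultimately show False by simp
qed

lemma psd_support_vector:
  assumes \<Lambda>: "psd n \<Lambda>" and \<rho>: "psd n \<rho>" and tr: "mtrace (\<Lambda> * \<rho>) \<noteq> 0"
  obtains v where "sesq n \<Lambda> v v \<noteq> 0"
    and "\<And>\<Lambda>' a. psd n \<Lambda>' \<Longrightarrow> mtrace (\<Lambda>' * \<rho>) = 0 \<Longrightarrow> a < n \<Longrightarrow> (\<Sum>b<n. \<Lambda>' $$ (a, b) * v b) = 0"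
proof -
  obtain w where w: "\<forall>a<n. \<forall>b<n. \<rho> $$ (a, b) = (\<Sum>j<n. w j a * cnj (w j b))"
    using psd_rank_one_sum[OF \<rho>] by blast
  have \<rho>c: "\<rho> \<in> carrier_mat n n" using \<rho> by (simp add: psd_def)
  have "(\<Sum>j<n. sesq n \<Lambda> (w j) (w j)) \<noteq> 0"
    using tr trace_mult_rank_one_sum[OF _ \<rho>c w] \<Lambda> by (simp add: psd_def)
  then obtain j where j: "j < n" "sesq n \<Lambda> (w j) (w j) \<noteq> 0"
    by (meson lessThan_iff sum.neutral)
  show ?thesis
    using that[OF j(2)] psd_trace_zero_imp_kernel[OF _ \<rho>c w _ j(1)] by blast
qed

lemma psd_triangular_witnesses:
  fixes \<Lambda> \<rho> :: "nat \<Rightarrow> complex mat"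
  assumes \<Lambda>: "\<forall>j<n. psd dt (\<Lambda> j)" and \<rho>: "\<forall>i<n. psd dt (\<rho> i)"
    and diag: "\<And>i. i < n \<Longrightarrow> mtrace (\<Lambda> i * \<rho> i) \<noteq> 0"
    and upper: "\<And>i j. i < j \<Longrightarrow> j < n \<Longrightarrow> mtrace (\<Lambda> j * \<rho> i) = 0"
  obtains v where "\<And>i. i < n \<Longrightarrow> sesq dt (\<Lambda> i) (v i) (v i) \<noteq> 0"
    and "\<And>i j a. i < j \<Longrightarrow> j < n \<Longrightarrow> a < dt \<Longrightarrow> (\<Sum>b<dt. \<Lambda> j $$ (a, b) * v i b) = 0"
proof -
  have "\<forall>i\<in>{..<n}. \<exists>v. sesq dt (\<Lambda> i) v v \<noteq> 0 \<and>
      (\<forall>j a. i < j \<and> j < n \<and> a < dt \<longrightarrow> (\<Sum>b<dt. \<Lambda> j $$ (a, b) * v b) = 0)"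
  proof
    fix i
    assume "i \<in> {..<n}"
    then have i: "i < n" by simp
    obtain v where v_diag: "sesq dt (\<Lambda> i) v v \<noteq> 0"
      and v_kernel: "\<And>\<Lambda>' a. psd dt \<Lambda>' \<Longrightarrow> mtrace (\<Lambda>' * \<rho> i) = 0 \<Longrightarrow> a < dt \<Longrightarrow>
        (\<Sum>b<dt. \<Lambda>' $$ (a, b) * v b) = 0"
      using psd_support_vector[of dt "\<Lambda> i" "\<rho> i"] \<Lambda> \<rho> diag i by blast
    have "(\<Sum>b<dt. \<Lambda> j $$ (a, b) * v b) = 0" if "i < j" "j < n" "a < dt" for j a
      using v_kernel[OF _ upper[OF that(1,2)] that(3)] \<Lambda> that(2) by simp
    then show "\<exists>v. sesq dt (\<Lambda> i) v v \<noteq> 0 \<and>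
      (\<forall>j a. i < j \<and> j < n \<and> a < dt \<longrightarrow> (\<Sum>b<dt. \<Lambda> j $$ (a, b) * v b) = 0)"
      using v_diag by blast
  qed
  from bchoice[OF this] obtain v where v: "\<forall>i\<in>{..<n}. sesq dt (\<Lambda> i) (v i) (v i) \<noteq> 0 \<and>
      (\<forall>j a. i < j \<and> j < n \<and> a < dt \<longrightarrow> (\<Sum>b<dt. \<Lambda> j $$ (a, b) * v i b) = 0)" ..
  show ?thesis
  proof (rule that)
    show "sesq dt (\<Lambda> i) (v i) (v i) \<noteq> 0" if "i < n" for i
      using v that by blast
    show "(\<Sum>b<dt. \<Lambda> j $$ (a, b) * v i b) = 0" if "i < j" "j < n" "a < dt" for i j a
      using v that less_trans[OF that(1,2)] by blast
  qed
qed

lemma P_Q_triangular_dim_bound: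
  assumes P: "P \<in> P_Q dt n n"
    and diag: "\<And>i. i < n \<Longrightarrow> P $$ (i, i) \<noteq> 0"
    and upper: "\<And>i j. i < j \<Longrightarrow> j < n \<Longrightarrow> P $$ (i, j) = 0"
  shows "n \<le> dt"
proof -
  obtain \<rho> \<Lambda> where states: "\<forall>i<n. density dt (\<rho> i)" and effects: "povm dt \<Lambda> n"
    and tr: "\<forall>i<n. \<forall>j<n. complex_of_real (P $$ (i, j)) = mtrace (\<Lambda> j * \<rho> i)"
    using P unfolding P_Q_def by blast
  have \<rho>: "\<forall>i<n. psd dt (\<rho> i)" and \<Lambda>: "\<forall>j<n. psd dt (\<Lambda> j)"
    using states effects by (simp_all add: density_def povm_def)
  have tr_diag: "mtrace (\<Lambda> i * \<rho> i) \<noteq> 0" if "i < n" for i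
    using tr diag that by (metis of_real_eq_0_iff)
  have tr_upper: "mtrace (\<Lambda> j * \<rho> i) = 0" if "i < j" "j < n" for i j
    using tr upper that by (metis of_real_0 order.strict_trans)
  obtain v where v_diag: "\<And>i. i < n \<Longrightarrow> sesq dt (\<Lambda> i) (v i) (v i) \<noteq> 0"
    and v_kernel: "\<And>i j a. i < j \<Longrightarrow> j < n \<Longrightarrow> a < dt \<Longrightarrow> (\<Sum>b<dt. \<Lambda> j $$ (a, b) * v i b) = 0"
    using psd_triangular_witnesses[OF \<Lambda> \<rho> tr_diag tr_upper] by metis
  have sesq_eq: "(\<Sum>c<dt. (\<Sum>a<dt. cnj (v j a) * \<Lambda> j $$ (a, c)) * v i c) = sesq dt (\<Lambda> j) (v j) (v i)" for i j
    unfolding sesq_def sum_distrib_right by (rule sum.swap)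
  show ?thesis
  proof (rule triangular_factorization_dim_bound)
    fix i
    assume "i < n"
    then show "(\<Sum>c<dt. (\<Sum>a<dt. cnj (v i a) * \<Lambda> i $$ (a, c)) * v i c) \<noteq> 0"
      unfolding sesq_eq by (rule v_diag)
  next
    fix i j
    assume "i < j" "j < n"
    then show "(\<Sum>c<dt. (\<Sum>a<dt. cnj (v j a) * \<Lambda> j $$ (a, c)) * v i c) = 0"
      unfolding sesq_eq sesq_def by (simp add: v_kernel mult.assoc flip: sum_distrib_left)
  qed
qed

section \<open>Inputs realizing pure states orthogonal to the maximally entangled state\<close>

definition phi_plus_coeff :: "nat \<Rightarrow> nat \<Rightarrow> real" where
  "phi_plus_coeff d r = (if r div d = r mod d then 1 / sqrt (real d) else 0)"

lemma phi_plus_index: "r < d * d \<Longrightarrow> phi_plus d $ r = complex_of_real (phi_plus_coeff d r)"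
  by (simp add: phi_plus_def phi_plus_coeff_def)

lemma phi_plus_coeff_pair:
  "x < d \<Longrightarrow> y < d \<Longrightarrow> phi_plus_coeff d (x * d + y) = (if x = y then 1 / sqrt (real d) else 0)"
  by (simp add: phi_plus_coeff_def)

lemma sum_phi_plus_coeff_sq:
  assumes "0 < d"
  shows "(\<Sum>r<d * d. (phi_plus_coeff d r)\<^sup>2) = 1"
proof -
  have "(\<Sum>r<d * d. (phi_plus_coeff d r)\<^sup>2) = (\<Sum>x<d. \<Sum>y<d. if x = y then 1 / real d else 0)"
    unfolding sum_lessThan_mult by (intro sum.cong refl) (simp add: phi_plus_coeff_pair power_divide)
  then show ?thesis using assms by simp
qed

locale phi_plus_complement =
  fixes d :: nat and V :: "complex mat"
  assumes d_ge_3: "d \<ge> 3"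
    and isometry_V: "isometry (d\<^sup>2 - 1) (d * d) V"
    and range_orth: "\<forall>v \<in> carrier_vec (d\<^sup>2 - 1). cinner (phi_plus d) (V *\<^sub>v v) = 0"
begin

definition n :: nat where "n = d\<^sup>2 - 1"

abbreviation N :: nat where "N \<equiv> d * d"

lemma N_eq_Suc_n: "N = Suc n"
  using d_ge_3 by (simp add: power2_eq_square n_def)

lemma less_n_imp_less_N [simp]: "c < n \<Longrightarrow> c < N"
  using N_eq_Suc_n by simp

lemma n_less_N [simp]: "n < N"
  using N_eq_Suc_n by simp

lemma V_carrier: "V \<in> carrier_mat N n"
  using isometry_V by (simp add: isometry_def n_def)

lemma V_adjoint_mult: "mat_adjoint V * V = 1\<^sub>m n"
  using isometry_V by (simp add: isometry_def n_def)

lemma phi_plus_orth_col: "c < n \<Longrightarrow> (\<Sum>r<N. complex_of_real (phi_plus_coeff d r) * V $$ (r, c)) = 0"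
proof -
  assume c: "c < n"
  have "cinner (phi_plus d) (V *\<^sub>v unit_vec n c) = 0" using range_orth c by (auto simp: n_def)
  moreover have "cinner (phi_plus d) (V *\<^sub>v unit_vec n c) =
      (\<Sum>r<N. complex_of_real (phi_plus_coeff d r) * V $$ (r, c))"
    unfolding cinner_def using V_carrier c
    by (intro sum.cong) (auto simp: phi_plus_def phi_plus_index[symmetric] row_def)
  ultimately show ?thesis by simp
qed

definition completion :: "complex mat" where
  "completion = mat N N (\<lambda>(r, c). if c < n then V $$ (r, c) else complex_of_real (phi_plus_coeff d r))"

lemma completion_carrier: "completion \<in> carrier_mat N N"
  by (simp add: completion_def)

lemma completion_adjoint_mult: "mat_adjoint completion * completion = 1\<^sub>m N"
proof (rule eq_matI)
  fix c c'
  assume "c < dim_row (1\<^sub>m N)" "c' < dim_col (1\<^sub>m N)"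
  then have cN: "c < N" "c' < N" by auto
  have e: "(mat_adjoint completion * completion) $$ (c, c') =
      (\<Sum>r<N. cnj (completion $$ (r, c)) * completion $$ (r, c'))"
    using cN completion_carrier by (subst mat_mult_entry[of _ N N _ N]) auto
  consider "c < n" "c' < n" | "c < n" "c' = n" | "c = n" "c' < n" | "c = n" "c' = n"
    using cN N_eq_Suc_n by linarith
  then show "(mat_adjoint completion * completion) $$ (c, c') = 1\<^sub>m N $$ (c, c')"
  proof cases
    case 1
    have "(\<Sum>r<N. cnj (completion $$ (r, c)) * completion $$ (r, c')) = (mat_adjoint V * V) $$ (c, c')"
      using 1 V_carrier by (subst mat_mult_entry[of _ n N _ n]) (auto simp: completion_def)
    then show ?thesis using e V_adjoint_mult 1 cN by simp
  next
    case 2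
    have "(\<Sum>r<N. cnj (completion $$ (r, c)) * completion $$ (r, c')) =
        cnj (\<Sum>r<N. complex_of_real (phi_plus_coeff d r) * V $$ (r, c))"
      using 2 by (auto simp: completion_def intro!: sum.cong)
    then show ?thesis using e phi_plus_orth_col 2 by simp
  next
    case 3
    have "(\<Sum>r<N. cnj (completion $$ (r, c)) * completion $$ (r, c')) =
        (\<Sum>r<N. complex_of_real (phi_plus_coeff d r) * V $$ (r, c'))"
      using 3 by (auto simp: completion_def intro!: sum.cong)
    then show ?thesis using e phi_plus_orth_col 3 by simp
  next
    case 4
    have "(\<Sum>r<N. cnj (completion $$ (r, c)) * completion $$ (r, c')) =
        complex_of_real (\<Sum>r<N. (phi_plus_coeff d r)\<^sup>2)"
      using 4 by (auto simp: completion_def power2_eq_square intro!: sum.cong)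
    also have "\<dots> = 1" using sum_phi_plus_coeff_sq d_ge_3 by simp
    finally show ?thesis using e 4 N_eq_Suc_n by simp
  qed
qed (auto simp: completion_def)

lemma V_mult_adjoint_entry:
  assumes "r < N" "r' < N"
  shows "(\<Sum>c<n. V $$ (r, c) * cnj (V $$ (r', c))) =
    (if r = r' then 1 else 0) - complex_of_real (phi_plus_coeff d r * phi_plus_coeff d r')"
proof -
  have "completion * mat_adjoint completion = 1\<^sub>m N"
    by (rule mat_mult_left_right_inverse[OF _ completion_carrier completion_adjoint_mult])
      (use completion_carrier in auto)
  moreover have "(completion * mat_adjoint completion) $$ (r, r') =
      (\<Sum>c<N. completion $$ (r, c) * cnj (completion $$ (r', c)))"
    using assms completion_carrier by (subst mat_mult_entry[of _ N N _ N]) auto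
  moreover have "\<dots> = (\<Sum>c<n. V $$ (r, c) * cnj (V $$ (r', c))) +
      complex_of_real (phi_plus_coeff d r * phi_plus_coeff d r')"
    using assms N_eq_Suc_n by (auto simp: completion_def intro!: sum.cong)
  ultimately show ?thesis using assms by simp
qed

definition adjoint_coord :: "(nat \<Rightarrow> real) \<Rightarrow> nat \<Rightarrow> complex" where
  "adjoint_coord \<psi> c = (\<Sum>r<N. cnj (V $$ (r, c)) * complex_of_real (\<psi> r))"

definition input_state :: "(nat \<Rightarrow> real) \<Rightarrow> complex mat" where
  "input_state \<psi> = mat n n (\<lambda>(c, c'). adjoint_coord \<psi> c * cnj (adjoint_coord \<psi> c'))"

lemma V_adjoint_coord:
  assumes orth: "(\<Sum>r<N. phi_plus_coeff d r * \<psi> r) = 0" and s: "s < N"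
  shows "(\<Sum>c<n. V $$ (s, c) * adjoint_coord \<psi> c) = complex_of_real (\<psi> s)"
proof -
  have "(\<Sum>c<n. V $$ (s, c) * adjoint_coord \<psi> c) =
      (\<Sum>r<N. (\<Sum>c<n. V $$ (s, c) * cnj (V $$ (r, c))) * complex_of_real (\<psi> r))"
    unfolding adjoint_coord_def sum_distrib_left sum_distrib_right
    by (subst sum.swap) (simp add: mult.assoc)
  also have "\<dots> = (\<Sum>r<N. if s = r then complex_of_real (\<psi> r) else 0) -
      (\<Sum>r<N. complex_of_real (phi_plus_coeff d s) * complex_of_real (phi_plus_coeff d r * \<psi> r))"
    by (subst sum_subtractf[symmetric])
      (intro sum.cong refl, auto simp: V_mult_adjoint_entry[OF s] algebra_simps)
  also have "\<dots> = complex_of_real (\<psi> s) -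
      complex_of_real (phi_plus_coeff d s) * complex_of_real (\<Sum>r<N. phi_plus_coeff d r * \<psi> r)"
    using s by (simp add: sum_distrib_left)
  also have "\<dots> = complex_of_real (\<psi> s)" using orth by simp
  finally show ?thesis .
qed

lemma input_state_density:
  assumes orth: "(\<Sum>r<N. phi_plus_coeff d r * \<psi> r) = 0" and norm: "(\<Sum>r<N. (\<psi> r)\<^sup>2) = 1"
  shows "density n (input_state \<psi>)"
  unfolding density_def
proof
  show "psd n (input_state \<psi>)"
  proof (rule psdI)
    show "input_state \<psi> \<in> carrier_mat n n" by (simp add: input_state_def)
    fix a b
    assume "a < n" "b < n"
    then show "input_state \<psi> $$ (a, b) = cnj (input_state \<psi> $$ (b, a))"
      by (simp add: input_state_def)
  next
    fix v
    define z where "z = (\<Sum>a<n. cnj (v a) * adjoint_coord \<psi> a)"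
    have "sesq n (input_state \<psi>) v v =
        (\<Sum>a<n. \<Sum>b<n. (cnj (v a) * adjoint_coord \<psi> a) * cnj (cnj (v b) * adjoint_coord \<psi> b))"
      unfolding sesq_def by (intro sum.cong refl) (simp add: input_state_def mult_ac)
    also have "\<dots> = z * cnj z" by (simp add: z_def sum_product)
    finally show "0 \<le> Re (sesq n (input_state \<psi>) v v)" by (simp add: complex_mult_cnj)
  qed
  have "mtrace (input_state \<psi>) = (\<Sum>c<n. cnj (adjoint_coord \<psi> c) * adjoint_coord \<psi> c)"
    by (simp add: mtrace_def input_state_def mult.commute)
  also have "\<dots> = (\<Sum>c<n. \<Sum>r<N. V $$ (r, c) * complex_of_real (\<psi> r) * adjoint_coord \<psi> c)"
    by (simp add: adjoint_coord_def sum_distrib_right)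
  also have "\<dots> = (\<Sum>r<N. complex_of_real (\<psi> r) * (\<Sum>c<n. V $$ (r, c) * adjoint_coord \<psi> c))"
    by (subst sum.swap) (simp add: sum_distrib_left mult_ac)
  also have "\<dots> = complex_of_real (\<Sum>r<N. (\<psi> r)\<^sup>2)"
    by (simp add: V_adjoint_coord[OF orth] power2_eq_square)
  finally show "mtrace (input_state \<psi>) = 1" using norm by simp
qed

lemma V_input_state_adjoint_entry:
  assumes orth: "(\<Sum>r<N. phi_plus_coeff d r * \<psi> r) = 0" and x: "x < N" and y: "y < N"
  shows "(V * input_state \<psi> * mat_adjoint V) $$ (x, y) = complex_of_real (\<psi> x * \<psi> y)"
proof -
  have R: "input_state \<psi> \<in> carrier_mat n n" by (simp add: input_state_def)
  have VR: "V * input_state \<psi> \<in> carrier_mat N n" using V_carrier R by simp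
  have row: "(V * input_state \<psi>) $$ (x, c') = complex_of_real (\<psi> x) * cnj (adjoint_coord \<psi> c')"
    if "c' < n" for c'
  proof -
    have "(V * input_state \<psi>) $$ (x, c') =
        (\<Sum>c<n. V $$ (x, c) * adjoint_coord \<psi> c) * cnj (adjoint_coord \<psi> c')"
      using that x by (subst mat_mult_entry[OF V_carrier R])
        (auto simp: input_state_def sum_distrib_right mult.assoc)
    then show ?thesis using V_adjoint_coord[OF orth x] by simp
  qed
  have "(V * input_state \<psi> * mat_adjoint V) $$ (x, y) =
      (\<Sum>c'<n. complex_of_real (\<psi> x) * cnj (V $$ (y, c') * adjoint_coord \<psi> c'))"
    using x y V_carrier
    by (subst mat_mult_entry[OF VR mat_adjoint_carrier[OF V_carrier]]) (auto simp: row mult_ac)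
  also have "\<dots> = complex_of_real (\<psi> x) * cnj (\<Sum>c'<n. V $$ (y, c') * adjoint_coord \<psi> c')"
    by (simp add: sum_distrib_left)
  also have "\<dots> = complex_of_real (\<psi> x * \<psi> y)" using V_adjoint_coord[OF orth y] by simp
  finally show ?thesis .
qed

end

section \<open>Computational-basis measurements\<close>

definition basis_proj :: "nat \<Rightarrow> nat \<Rightarrow> complex mat" where
  "basis_proj d l = mat d d (\<lambda>(a, b). if a = l \<and> b = l then 1 else 0)"

lemma pair_index_eq_iff:
  "k < d \<Longrightarrow> (t div d = l \<and> t mod d = k) \<longleftrightarrow> t = l * d + (k :: nat)"
  by (auto simp: mult.commute)

lemma tensor_basis_proj_entry:
  assumes "k < d" "t < d * d" "y < d * d"
  shows "tensor_mat (basis_proj d l) (basis_proj d k) $$ (t, y) =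
    (if t = l * d + k \<and> y = l * d + k then 1 else 0)"
  using assms pair_index_eq_iff[OF assms(1), of t l] pair_index_eq_iff[OF assms(1), of y l]
  by (auto simp: tensor_mat_def basis_proj_def less_mult_imp_div_less)

lemma povm_basis_proj: "povm d (basis_proj d) d"
  unfolding povm_def
proof (intro conjI allI impI)
  fix l
  assume l: "l < d"
  show "psd d (basis_proj d l)"
  proof (rule psdI)
    show "basis_proj d l \<in> carrier_mat d d" by (simp add: basis_proj_def)
  next
    fix a b
    assume "a < d" "b < d"
    then show "basis_proj d l $$ (a, b) = cnj (basis_proj d l $$ (b, a))"
      by (simp add: basis_proj_def)
  next
    fix v
    have "sesq d (basis_proj d l) v v = (\<Sum>a<d. \<Sum>b<d. if a = l \<and> b = l then cnj (v l) * v l else 0)"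
      unfolding sesq_def by (intro sum.cong refl) (auto simp: basis_proj_def)
    also have "\<dots> = v l * cnj (v l)" by (simp add: sum_lessThan_delta2[OF l l] mult.commute)
    finally show "0 \<le> Re (sesq d (basis_proj d l) v v)" by (simp add: complex_mult_cnj)
  qed
next
  fix a b
  assume "a < d" "b < d"
  then show "(\<Sum>j<d. basis_proj d j $$ (a, b)) = (if a = b then 1 else 0)"
    by (simp add: basis_proj_def)
qed

context phi_plus_complement
begin

lemma trace_basis_measurement:
  assumes orth: "(\<Sum>r<N. phi_plus_coeff d r * \<psi> r) = 0" and l: "l < d" and k: "k < d"
  shows "mtrace (tensor_mat (basis_proj d l) (basis_proj d k) * V * input_state \<psi> * mat_adjoint V) =
    complex_of_real ((\<psi> (l * d + k))\<^sup>2)"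
proof -
  define T where "T = tensor_mat (basis_proj d l) (basis_proj d k)"
  define M where "M = V * input_state \<psi> * mat_adjoint V"
  define s where "s = l * d + k"
  have sN: "s < N"
  proof -
    have "l * d + k < (l + 1) * d" using k by simp
    also have "\<dots> \<le> d * d" using l by (intro mult_le_mono1) simp
    finally show ?thesis by (simp add: s_def)
  qed
  have T: "T \<in> carrier_mat N N" by (simp add: T_def tensor_mat_def basis_proj_def)
  have R: "input_state \<psi> \<in> carrier_mat n n" by (simp add: input_state_def)
  have M: "M \<in> carrier_mat N N"
    unfolding M_def using mult_carrier_mat[OF V_carrier R] mat_adjoint_carrier[OF V_carrier] by simp
  have VR: "V * input_state \<psi> \<in> carrier_mat N n" using mult_carrier_mat[OF V_carrier R] .
  have "T * V * input_state \<psi> * mat_adjoint V = T * M"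
    unfolding M_def assoc_mult_mat[OF T V_carrier R]
    by (rule assoc_mult_mat[OF T VR mat_adjoint_carrier[OF V_carrier]])
  moreover have "mtrace (T * M) = (\<Sum>t<N. \<Sum>y<N. T $$ (t, y) * M $$ (y, t))"
    by (rule mtrace_mult[OF T M])
  moreover have "\<dots> = (\<Sum>t<N. \<Sum>y<N. if t = s \<and> y = s then M $$ (s, s) else 0)"
    by (intro sum.cong refl) (simp add: T_def s_def tensor_basis_proj_entry[OF k])
  moreover have "\<dots> = complex_of_real ((\<psi> s)\<^sup>2)"
    using sum_lessThan_delta2[OF sN sN, of "\<lambda>_ _. M $$ (s, s)"] V_input_state_adjoint_entry[OF orth sN sN]
    by (simp add: M_def power2_eq_square)
  ultimately show ?thesis by (simp add: T_def s_def)
qed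

end

section \<open>The encoding realizing M_kd\<close>

definition gell_mann_coeff :: "nat \<Rightarrow> nat \<Rightarrow> real" where
  "gell_mann_coeff I x = (if x < I then 1 else if x = I then - real I else 0)"

lemma sum_lessThan_if_less_eq:
  "I < (d :: nat) \<Longrightarrow> (\<Sum>x<d. if x < I then f x else if x = I then g else 0) = (\<Sum>x<I. f x) + (g :: real)"
proof (induction d)
  case 0
  then show ?case by simp
next
  case (Suc d)
  show ?case
  proof (cases "I < d")
    case True
    then show ?thesis using Suc by simp
  next
    case False
    then have "I = d" using Suc by simp
    moreover have "(\<Sum>x<d. if x < I then f x else if x = I then g else 0) = (\<Sum>x<d. f x)"
      using \<open>I = d\<close> by (intro sum.cong) auto
    ultimately show ?thesis by simp
  qed
qed

lemma sum_gell_mann_coeff: "I < d \<Longrightarrow> (\<Sum>x<d. gell_mann_coeff I x) = 0"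
  unfolding gell_mann_coeff_def using sum_lessThan_if_less_eq[of I d "\<lambda>_. 1" "- real I"] by simp

lemma sum_gell_mann_coeff_sq:
  assumes "I < d"
  shows "(\<Sum>x<d. (gell_mann_coeff I x)\<^sup>2) = real I * (real I + 1)"
proof -
  have "(\<Sum>x<d. (gell_mann_coeff I x)\<^sup>2) = (\<Sum>x<d. if x < I then 1 else if x = I then (real I)\<^sup>2 else 0)"
    by (intro sum.cong refl) (simp add: gell_mann_coeff_def)
  also have "\<dots> = real I + (real I)\<^sup>2"
    using sum_lessThan_if_less_eq[OF assms, of "\<lambda>_. 1" "(real I)\<^sup>2"] by simp
  finally show ?thesis by (simp add: power2_eq_square algebra_simps)
qed

text \<open>M_Sigma records the computational-basis statistics of the normalized diagonal Gell-Mann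
  vectors, with the outcomes 0 and 1 merged.\<close>

lemma M_Sigma_entry_gell_mann:
  assumes "1 \<le> I" "2 \<le> J"
  shows "M_Sigma_entry I J = (gell_mann_coeff I J)\<^sup>2 / (real I * (real I + 1))"
  using assms by (auto simp: M_Sigma_entry_def gell_mann_coeff_def power2_eq_square)

lemma M_Sigma_entry_1_gell_mann:
  assumes "1 \<le> I"
  shows "M_Sigma_entry I 1 =
    ((gell_mann_coeff I 0)\<^sup>2 + (gell_mann_coeff I 1)\<^sup>2) / (real I * (real I + 1))"
  using assms by (cases "I = 1") (auto simp: M_Sigma_entry_def gell_mann_coeff_def add_divide_distrib)

text \<open>The last d(d-1) rows of M_kd are indexed by the pairs (l, k) with l \<noteq> k, in lexicographic
  order.\<close>

definition offdiag_index :: "nat \<Rightarrow> nat \<Rightarrow> nat \<Rightarrow> nat" where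
  "offdiag_index d l k = d - 1 + l * (d - 1) + (if k < l then k else k - 1)"

definition offdiag_fst :: "nat \<Rightarrow> nat \<Rightarrow> nat" where
  "offdiag_fst d i = (i - (d - 1)) div (d - 1)"

definition offdiag_snd :: "nat \<Rightarrow> nat \<Rightarrow> nat" where
  "offdiag_snd d i =
    (let b = (i - (d - 1)) mod (d - 1) in if b < offdiag_fst d i then b else b + 1)"

lemma square_minus_one: "(d :: nat) \<ge> 1 \<Longrightarrow> d\<^sup>2 - 1 = (d - 1) * (d - 1) + 2 * (d - 1)"
  by (cases d) (auto simp: power2_eq_square algebra_simps)

lemma offdiag_index_inverse:
  assumes d: "d \<ge> 2" and i1: "d - 1 \<le> i" and i2: "i < d\<^sup>2 - 1"
  shows "offdiag_fst d i < d" "offdiag_snd d i < d" "offdiag_fst d i \<noteq> offdiag_snd d i"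
    "offdiag_index d (offdiag_fst d i) (offdiag_snd d i) = i"
proof -
  define D where "D = d - 1"
  define m where "m = i - D"
  have dD: "d = D + 1" and D1: "D \<ge> 1" using d by (simp_all add: D_def)
  have "i < D * D + 2 * D" using i2 square_minus_one[of d] d by (simp add: D_def)
  then have "m < D * D + D" by (simp add: m_def)
  then have mlt: "m < d * D" using dD by simp
  have fst: "offdiag_fst d i = m div D" by (simp add: offdiag_fst_def m_def D_def)
  have snd: "offdiag_snd d i = (if m mod D < m div D then m mod D else m mod D + 1)"
    by (simp add: offdiag_snd_def fst Let_def m_def D_def)
  show "offdiag_fst d i < d" unfolding fst using mlt by (simp add: less_mult_imp_div_less)
  have "m mod D < D" using D1 by simp
  then show "offdiag_snd d i < d" unfolding snd using dD by auto
  show "offdiag_fst d i \<noteq> offdiag_snd d i" unfolding fst snd by auto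
  have "offdiag_index d (offdiag_fst d i) (offdiag_snd d i) = D + (m div D) * D + m mod D"
    unfolding offdiag_index_def fst snd by (auto simp: D_def)
  also have "\<dots> = D + m" by simp
  also have "\<dots> = i" using i1 by (simp add: m_def D_def)
  finally show "offdiag_index d (offdiag_fst d i) (offdiag_snd d i) = i" .
qed

lemma offdiag_index_bound:
  assumes d: "d \<ge> 2" and l: "l < d" and k: "k < d" and lk: "l \<noteq> k"
  shows "offdiag_index d l k < d\<^sup>2 - 1"
proof -
  define D where "D = d - 1"
  have dD: "d = D + 1" using d by (simp add: D_def)
  have "(if k < l then k else k - 1) \<le> D - 1" using l k lk dD by auto
  moreover have "l * D \<le> D * D" using l dD by (simp add: mult_le_mono1)
  ultimately have "offdiag_index d l k \<le> D + D * D + (D - 1)"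
    unfolding offdiag_index_def D_def[symmetric] by linarith
  also have "\<dots> < D * D + 2 * D" using d dD by simp
  finally show ?thesis using square_minus_one[of d] d by (simp add: D_def)
qed

definition encoding_vector :: "nat \<Rightarrow> nat \<Rightarrow> nat \<Rightarrow> real" where
  "encoding_vector d i r =
    (if i < d - 1
     then (if r div d = r mod d
           then gell_mann_coeff (i + 1) (r div d) / sqrt (real (i + 1) * (real (i + 1) + 1))
           else 0)
     else (if r = offdiag_fst d i * d + offdiag_snd d i then 1 else 0))"

lemma encoding_vector_diag_pair:
  "i < d - 1 \<Longrightarrow> x < d \<Longrightarrow> y < d \<Longrightarrow> encoding_vector d i (x * d + y) =
    (if x = y then gell_mann_coeff (i + 1) x / sqrt (real (i + 1) * (real (i + 1) + 1)) else 0)"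
  by (simp add: encoding_vector_def)

lemma encoding_vector_offdiag_pair:
  "\<not> i < d - 1 \<Longrightarrow> x < d \<Longrightarrow> y < d \<Longrightarrow> offdiag_snd d i < d \<Longrightarrow>
    encoding_vector d i (x * d + y) = (if x = offdiag_fst d i \<and> y = offdiag_snd d i then 1 else 0)"
  using pair_index_eq_iff[of "offdiag_snd d i" d "x * d + y" "offdiag_fst d i"]
  by (auto simp: encoding_vector_def)

lemma encoding_vector_orth_phi_plus:
  assumes d: "d \<ge> 2" and i: "i < d\<^sup>2 - 1"
  shows "(\<Sum>r<d * d. phi_plus_coeff d r * encoding_vector d i r) = 0"
proof (cases "i < d - 1")
  case True
  have "(\<Sum>r<d * d. phi_plus_coeff d r * encoding_vector d i r) =
      (\<Sum>x<d. \<Sum>y<d. if x = y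
        then 1 / sqrt (real d) / sqrt (real (i + 1) * (real (i + 1) + 1)) * gell_mann_coeff (i + 1) x
        else 0)"
    unfolding sum_lessThan_mult
    by (intro sum.cong refl) (simp add: phi_plus_coeff_pair encoding_vector_diag_pair[OF True])
  also have "\<dots> = 1 / sqrt (real d) / sqrt (real (i + 1) * (real (i + 1) + 1)) *
      (\<Sum>x<d. gell_mann_coeff (i + 1) x)"
    by (simp add: sum_distrib_left)
  also have "\<dots> = 0" using True sum_gell_mann_coeff[of "i + 1" d] by simp
  finally show ?thesis .
next
  case False
  then have "offdiag_snd d i < d" "offdiag_fst d i \<noteq> offdiag_snd d i"
    using offdiag_index_inverse[OF d _ i] by auto
  then show ?thesis unfolding sum_lessThan_mult
    by (intro sum.neutral ballI) (auto simp: phi_plus_coeff_pair encoding_vector_offdiag_pair[OF False])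
qed

lemma encoding_vector_norm:
  assumes d: "d \<ge> 2" and i: "i < d\<^sup>2 - 1"
  shows "(\<Sum>r<d * d. (encoding_vector d i r)\<^sup>2) = 1"
proof (cases "i < d - 1")
  case True
  have "(\<Sum>r<d * d. (encoding_vector d i r)\<^sup>2) =
      (\<Sum>x<d. \<Sum>y<d. if x = y
        then (gell_mann_coeff (i + 1) x)\<^sup>2 / (real (i + 1) * (real (i + 1) + 1)) else 0)"
    unfolding sum_lessThan_mult
    by (intro sum.cong refl) (simp add: encoding_vector_diag_pair[OF True] power_divide)
  also have "\<dots> = 1"
    using True sum_gell_mann_coeff_sq[of "i + 1" d] by (simp flip: sum_divide_distrib)
  finally show ?thesis .
next
  case False
  then have off: "offdiag_fst d i < d" "offdiag_snd d i < d"
    using offdiag_index_inverse[OF d _ i] by auto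
  have "(\<Sum>r<d * d. (encoding_vector d i r)\<^sup>2) =
      (\<Sum>x<d. \<Sum>y<d. if x = offdiag_fst d i \<and> y = offdiag_snd d i then 1 else 0)"
    unfolding sum_lessThan_mult
    by (intro sum.cong refl) (simp add: encoding_vector_offdiag_pair[OF False _ _ off(2)])
  also have "\<dots> = 1" by (rule sum_lessThan_delta2[OF off])
  finally show ?thesis .
qed

text \<open>Truncated subtraction sends both diagonal outcomes (0, 0) and (1, 1) to column 0.\<close>

definition post_processing :: "nat \<Rightarrow> nat \<Rightarrow> nat \<Rightarrow> nat \<Rightarrow> real" where
  "post_processing d j l k =
    (if l = k then (if j = l - 1 then 1 else 0) else (if j = offdiag_index d l k then 1 else 0))"

lemma post_processing_stochastic:
  assumes d: "d \<ge> 2" and l: "l < d" and k: "k < d"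
  shows "(\<Sum>j<d\<^sup>2 - 1. post_processing d j l k) = 1"
proof (cases "l = k")
  case True
  have "d \<le> d\<^sup>2" by (simp add: power2_eq_square)
  then have "l - 1 < d\<^sup>2 - 1" using d l by linarith
  then show ?thesis using True by (simp add: post_processing_def)
next
  case False
  then show ?thesis
    using offdiag_index_bound[OF d l k False] by (simp add: post_processing_def)
qed

lemma sum_lessThan_if_eq_pred:
  assumes "(d :: nat) \<ge> 2"
  shows "(\<Sum>l<d. if j = l - 1 then h l else (0 :: real)) =
    (if j = 0 then h 0 + h 1 else if j + 1 < d then h (j + 1) else 0)"
proof -
  have "(\<Sum>l<d. if j = l - 1 then h l else 0) = (\<Sum>l\<in>{l \<in> {..<d}. j = l - 1}. h l)"
    by (rule sum.inter_filter[symmetric]) simp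
  also have "{l \<in> {..<d}. j = l - 1} = (if j = 0 then {0, 1} else if j + 1 < d then {j + 1} else {})"
    using assms by auto
  finally show ?thesis by auto
qed

lemma encoding_statistics_diag:
  assumes d: "d \<ge> 2" and i: "i < d - 1"
  shows "(\<Sum>l<d. \<Sum>k<d. post_processing d j l k * (encoding_vector d i (l * d + k))\<^sup>2) =
    (if j = 0 then M_Sigma_entry (i + 1) 1 else if j + 1 < d then M_Sigma_entry (i + 1) (j + 1) else 0)"
proof -
  define I where "I = i + 1"
  have I1: "1 \<le> I" by (simp add: I_def)
  define h where "h l = (gell_mann_coeff I l)\<^sup>2 / (real I * (real I + 1))" for l
  have "(\<Sum>l<d. \<Sum>k<d. post_processing d j l k * (encoding_vector d i (l * d + k))\<^sup>2) =
      (\<Sum>l<d. \<Sum>k<d. if k = l then (if j = l - 1 then h l else 0) else 0)"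
    by (intro sum.cong refl)
      (auto simp: encoding_vector_diag_pair[OF i] post_processing_def h_def power_divide I_def)
  also have "\<dots> = (\<Sum>l<d. if j = l - 1 then h l else 0)" by simp
  also have "\<dots> = (if j = 0 then h 0 + h 1 else if j + 1 < d then h (j + 1) else 0)"
    using sum_lessThan_if_eq_pred[OF d] .
  also have "\<dots> = (if j = 0 then M_Sigma_entry I 1 else if j + 1 < d then M_Sigma_entry I (j + 1) else 0)"
  proof -
    have "h 0 + h 1 = M_Sigma_entry I 1"
      using M_Sigma_entry_1_gell_mann[OF I1] by (simp add: h_def add_divide_distrib)
    moreover have "h (j + 1) = M_Sigma_entry I (j + 1)" if "j \<noteq> 0"
      using M_Sigma_entry_gell_mann[OF I1, of "j + 1"] that by (simp add: h_def)
    ultimately show ?thesis by simp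
  qed
  finally show ?thesis by (simp add: I_def)
qed

lemma encoding_statistics_offdiag:
  assumes d: "d \<ge> 2" and i1: "\<not> i < d - 1" and i2: "i < d\<^sup>2 - 1"
  shows "(\<Sum>l<d. \<Sum>k<d. post_processing d j l k * (encoding_vector d i (l * d + k))\<^sup>2) =
    (if j = i then 1 else 0)"
proof -
  note off = offdiag_index_inverse[OF d _ i2]
  have "(\<Sum>l<d. \<Sum>k<d. post_processing d j l k * (encoding_vector d i (l * d + k))\<^sup>2) =
      (\<Sum>l<d. \<Sum>k<d. if l = offdiag_fst d i \<and> k = offdiag_snd d i then post_processing d j l k else 0)"
    using i1 off by (intro sum.cong refl) (auto simp: encoding_vector_offdiag_pair)
  also have "\<dots> = post_processing d j (offdiag_fst d i) (offdiag_snd d i)"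
    using i1 off by (intro sum_lessThan_delta2) auto
  also have "\<dots> = (if j = i then 1 else 0)" using i1 off by (simp add: post_processing_def)
  finally show ?thesis .
qed

lemma M_kd_entry:
  assumes "i < d\<^sup>2 - 1" "j < d\<^sup>2 - 1"
  shows "M_kd d $$ (i, j) =
    (if i < d - 1 \<and> j < d - 1 then M_Sigma_entry (i + 1) (j + 1)
     else if d - 1 \<le> i \<and> d - 1 \<le> j then (if i = j then 1 else 0) else 0)"
  using assms by (simp add: M_kd_def)

lemma encoding_statistics:
  assumes d: "d \<ge> 2" and i: "i < d\<^sup>2 - 1" and j: "j < d\<^sup>2 - 1"
  shows "(\<Sum>l<d. \<Sum>k<d. post_processing d j l k * (encoding_vector d i (l * d + k))\<^sup>2) = M_kd d $$ (i, j)"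
proof (cases "i < d - 1")
  case True
  then show ?thesis
    using encoding_statistics_diag[OF d True, of j] i j by (auto simp: M_kd_entry)
next
  case False
  then show ?thesis
    using encoding_statistics_offdiag[OF d False i, of j] i j by (auto simp: M_kd_entry)
qed

lemma M_kd_diag_nonzero: "i < d\<^sup>2 - 1 \<Longrightarrow> M_kd d $$ (i, i) \<noteq> 0"
  by (auto simp: M_kd_entry M_Sigma_entry_def)

lemma M_kd_upper_zero: "i < j \<Longrightarrow> j < d\<^sup>2 - 1 \<Longrightarrow> M_kd d $$ (i, j) = 0"
  by (auto simp: M_kd_entry M_Sigma_entry_def)

context phi_plus_complement
begin

lemma M_kd_in_P_min: "M_kd d \<in> P_min V d d n n"
  unfolding P_min_def
proof (intro CollectI conjI exI)
  have d: "d \<ge> 2" using d_ge_3 by simp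
  have orth: "(\<Sum>r<N. phi_plus_coeff d r * encoding_vector d i r) = 0" if "i < n" for i
    using encoding_vector_orth_phi_plus[OF d] that by (simp add: n_def)
  show "M_kd d \<in> carrier_mat n n" by (simp add: M_kd_def n_def)
  show "\<forall>i<n. density (dim_col V) (input_state (encoding_vector d i))"
    using V_carrier input_state_density[OF orth] encoding_vector_norm[OF d] by (simp add: n_def)
  show "povm d (basis_proj d) d" "povm d (basis_proj d) d" by (rule povm_basis_proj)+
  show "\<forall>l<d. \<forall>k<d. (\<forall>j<n. 0 \<le> post_processing d j l k) \<and> (\<Sum>j<n. post_processing d j l k) = 1"
    using post_processing_stochastic[OF d] by (simp add: post_processing_def n_def)
  show "\<forall>i<n. \<forall>j<n. complex_of_real (M_kd d $$ (i, j)) =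
      (\<Sum>l<d. \<Sum>k<d. complex_of_real (post_processing d j l k) *
        mtrace (tensor_mat (basis_proj d l) (basis_proj d k) * V * input_state (encoding_vector d i) *
          mat_adjoint V))"
  proof (intro allI impI)
    fix i j
    assume i: "i < n" and j: "j < n"
    have "(\<Sum>l<d. \<Sum>k<d. complex_of_real (post_processing d j l k) *
        mtrace (tensor_mat (basis_proj d l) (basis_proj d k) * V * input_state (encoding_vector d i) *
          mat_adjoint V)) =
        complex_of_real (\<Sum>l<d. \<Sum>k<d. post_processing d j l k * (encoding_vector d i (l * d + k))\<^sup>2)"
      by (simp add: trace_basis_measurement[OF orth[OF i]])
    also have "\<dots> = complex_of_real (M_kd d $$ (i, j))"
      using encoding_statistics[OF d] i j by (simp add: n_def)
    finally show "complex_of_real (M_kd d $$ (i, j)) =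
      (\<Sum>l<d. \<Sum>k<d. complex_of_real (post_processing d j l k) *
        mtrace (tensor_mat (basis_proj d l) (basis_proj d k) * V * input_state (encoding_vector d i) *
          mat_adjoint V))" by simp
  qed
qed

end

theorem theorem3:
  fixes d :: nat and V :: "complex mat"
  assumes "d \<ge> 3"
    and "isometry (d\<^sup>2 - 1) (d * d) V"
    and "\<forall>v \<in> carrier_vec (d\<^sup>2 - 1). cinner (phi_plus d) (V *\<^sub>v v) = 0"
  shows "M_kd d \<in> P_min V d d (d\<^sup>2 - 1) (d\<^sup>2 - 1) \<and>
         (\<forall>dt < d\<^sup>2 - 1. \<not> P_min V d d (d\<^sup>2 - 1) (d\<^sup>2 - 1) \<subseteq> P_Q dt (d\<^sup>2 - 1) (d\<^sup>2 - 1))"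
proof -
  interpret phi_plus_complement d V using assms by unfold_locales
  have M_kd: "M_kd d \<in> P_min V d d (d\<^sup>2 - 1) (d\<^sup>2 - 1)"
    using M_kd_in_P_min by (simp add: n_def)
  have "d\<^sup>2 - 1 \<le> dt" if "M_kd d \<in> P_Q dt (d\<^sup>2 - 1) (d\<^sup>2 - 1)" for dt
    using P_Q_triangular_dim_bound[OF that] M_kd_diag_nonzero M_kd_upper_zero by blast
  then show ?thesis using M_kd by (meson leD subsetD)
qed

end
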